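(* Assume $p,q\in[0,1]$. Let $n\ge3$. If $v\in I_n$ has $k^{(r)}_v>0$, then there exists $u\in\alpha_3(v)$ and there exist $\tilde a,\tilde b,\tilde c,\tilde d$ with $\tilde a\overset m\sim\tilde b$, $\tilde c\overset m\sim\tilde d$ and $u\in\tilde\alpha(\tilde a)\cap\tilde\alpha(\tilde b)\cap\tilde\alpha(\tilde c)\cap\tilde\alpha(\tilde d)$, such that either $\tilde a,\tilde b,\tilde c,\tilde d\in\tilde I_n$ with $\tilde a,\tilde b,\tilde d$ distinct, or $\tilde a,\tilde b\in\tilde I_{n-1}$ and $\tilde c,\tilde d\in\tilde I_n$.
   Context: Ulam–Harris labels: $\mathcal U_n=\mathbb N^n$ ($n\ge0$, $\mathcal U_0=\{\emptyset\}$), $\mathcal U=\bigcup_{n\ge0}\mathcal U_n$; for $u=u_1\dots u_k$ write $ui=u_1\dots u_ki$. Let $(\xi_u)_{u\in\mathcal U}$ be i.i.d. Poisson with mean $1+p$, and $(\delta_{u,v})_{u,v\in\mathcal U}$, $(\mu_{\{u,v\}})_{u\ne v\in\mathcal U}$ i.i.d. Bernoulli with mean $q$, all independent. The process $\mathcal G(p,q)=(G_n)_{n\ge0}$, $G_n=(V_n,E_n)$: $G_0=(\{\emptyset\},\emptyset)$, and $I_m=V_m\cap\mathcal U_m$. Given $G_{n-1}$ ($n\ge1$): (1) for $u\in I_{n-1}$ let $\mathcal K_u=\{v\in V_{n-1}:d_{G_{n-1}}(u,v)=3\}$ and $\mathcal C_u=\{j\in\mathbb N:j\le\xi_u,\ \delta_{v,uj}=0\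 \forall v\in\mathcal K_u\}$; let $\tilde G_n$ have vertex set $V_{n-1}\cup\{ui:u\in I_{n-1},i\in\mathcal C_u\}$ and edge set $E_{n-1}\cup\{\{u,ui\}:u\in I_{n-1},i\in\mathcal C_u\}$, and $\tilde I_n$ its set of vertices in $\mathcal U_n$. (2) For $u,v\in\tilde I_n$ write $u\overset{m}{\sim}v$ iff $d_{\tilde G_n}(u,v)=4$ and $\mu_{\{u,v\}}=1$; let $\sim$ be the equivalence relation on $\tilde I_n$ generated by $\overset m\sim$, and $\pi(u)$ the lexicographically smallest element of the class of $u$. Then $V_n=V_{n-1}\cup\{\pi(u):u\in\tilde I_n\}$, $E_n=E_{n-1}\cup\{\{v,\pi(vi)\}:v\in I_{n-1},i\in\mathcal C_v\}$. (The relation $\overset m\sim$ is defined on each $\tilde I_m$, $m\ge1$, separately.) For $x\in I_n$, $\alpha(x)=\bigcup_{0\le j\le n}\{y\in I_{n-j}:d_{G_n}(y,x)=j\}$ and $\alpha_i(x)=\alpha(x)\cap I_{n-i}$. For $\tilde x\in\tilde I_m$, $\tilde\alpha(\tilde x)=\{\tilde x\}\cup\bigcup_{1\le j\le m}\{y\in I_{m-j}:d_{\tilde G_m}(y,\tilde x)=j\}$. For $x\in I_n$, $k^{(r)}_x=|\{y\in I_{n-1}:\alpha_1(y)\cap\alpha_2(x)=\emptyset,\ d_{G_n}(x,y)=3\}|$. *)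

theory Defs
  imports Complex_Main "HOL-Library.List_Lexorder"
begin

text \<open>Ulam-Harris labels are lists of naturals; the child ui of u is u @ [i].
  Children indices are taken from {1..xi u}.  A graph is a pair (V, E) with
  E a set of two-element sets.\<close>

type_synonym label = "nat list"
type_synonym graph = "label set \<times> label set set"

inductive walk :: "label set set \<Rightarrow> nat \<Rightarrow> label \<Rightarrow> label \<Rightarrow> bool" for E where
  walk0: "walk E 0 u u"
| walkS: "walk E k u w \<Longrightarrow> {w, v} \<in> E \<Longrightarrow> w \<noteq> v \<Longrightarrow> walk E (Suc k) u v"

definition gdist :: "label set set \<Rightarrow> label \<Rightarrow> label \<Rightarrow> nat \<Rightarrow> bool" where
  "gdist E u v j \<longleftrightarrow> walk E j u v \<and> (\<forall>i<j. \<not> walk E i u v)"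

definition Ilev :: "label set \<Rightarrow> nat \<Rightarrow> label set" where
  "Ilev V m = {x \<in> V. length x = m}"

definition Kset :: "graph \<Rightarrow> label \<Rightarrow> label set" where
  "Kset G u = {v \<in> fst G. gdist (snd G) u v 3}"

definition Cset :: "(label \<Rightarrow> nat) \<Rightarrow> (label \<Rightarrow> label \<Rightarrow> bool) \<Rightarrow> graph \<Rightarrow> label \<Rightarrow> nat set" where
  "Cset xi delta G u = {j. 1 \<le> j \<and> j \<le> xi u \<and> (\<forall>v\<in>Kset G u. \<not> delta v (u @ [j]))}"

definition tgraph :: "(label \<Rightarrow> nat) \<Rightarrow> (label \<Rightarrow> label \<Rightarrow> bool) \<Rightarrow> nat \<Rightarrow> graph \<Rightarrow> graph" where
  "tgraph xi delta m G =
     (fst G \<union> {u @ [i] | u i. u \<in> Ilev (fst G) (m - 1) \<and> i \<in> Cset xi delta G u},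
      snd G \<union> {{u, u @ [i]} | u i. u \<in> Ilev (fst G) (m - 1) \<and> i \<in> Cset xi delta G u})"

definition msim_in :: "(label set \<Rightarrow> bool) \<Rightarrow> nat \<Rightarrow> graph \<Rightarrow> label \<Rightarrow> label \<Rightarrow> bool" where
  "msim_in mu m Gt x y \<longleftrightarrow> x \<in> Ilev (fst Gt) m \<and> y \<in> Ilev (fst Gt) m \<and>
     gdist (snd Gt) x y 4 \<and> mu {x, y}"

definition piu :: "(label set \<Rightarrow> bool) \<Rightarrow> nat \<Rightarrow> graph \<Rightarrow> label \<Rightarrow> label" where
  "piu mu m Gt u = Min {w \<in> Ilev (fst Gt) m. (symclp (msim_in mu m Gt))\<^sup>*\<^sup>* u w}"

definition next_graph :: "(label \<Rightarrow> nat) \<Rightarrow> (label \<Rightarrow> label \<Rightarrow> bool) \<Rightarrow> (label set \<Rightarrow> bool)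
     \<Rightarrow> nat \<Rightarrow> graph \<Rightarrow> graph" where
  "next_graph xi delta mu m G =
     (let Gt = tgraph xi delta m G in
      (fst G \<union> piu mu m Gt ` Ilev (fst Gt) m,
       snd G \<union> {{v, piu mu m Gt (v @ [i])} | v i. v \<in> Ilev (fst G) (m - 1) \<and> i \<in> Cset xi delta G v}))"

fun Gp :: "(label \<Rightarrow> nat) \<Rightarrow> (label \<Rightarrow> label \<Rightarrow> bool) \<Rightarrow> (label set \<Rightarrow> bool) \<Rightarrow> nat \<Rightarrow> graph" where
  "Gp xi delta mu 0 = ({[]}, {})"
| "Gp xi delta mu (Suc n) = next_graph xi delta mu (Suc n) (Gp xi delta mu n)"

definition Gt :: "(label \<Rightarrow> nat) \<Rightarrow> (label \<Rightarrow> label \<Rightarrow> bool) \<Rightarrow> (label set \<Rightarrow> bool) \<Rightarrow> nat \<Rightarrow> graph" where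
  "Gt xi delta mu m = tgraph xi delta m (Gp xi delta mu (m - 1))"

definition It :: "(label \<Rightarrow> nat) \<Rightarrow> (label \<Rightarrow> label \<Rightarrow> bool) \<Rightarrow> (label set \<Rightarrow> bool) \<Rightarrow> nat \<Rightarrow> label set" where
  "It xi delta mu m = Ilev (fst (Gt xi delta mu m)) m"

definition I :: "(label \<Rightarrow> nat) \<Rightarrow> (label \<Rightarrow> label \<Rightarrow> bool) \<Rightarrow> (label set \<Rightarrow> bool) \<Rightarrow> nat \<Rightarrow> label set" where
  "I xi delta mu m = Ilev (fst (Gp xi delta mu m)) m"

definition msim :: "(label \<Rightarrow> nat) \<Rightarrow> (label \<Rightarrow> label \<Rightarrow> bool) \<Rightarrow> (label set \<Rightarrow> bool) \<Rightarrow> nat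
     \<Rightarrow> label \<Rightarrow> label \<Rightarrow> bool" where
  "msim xi delta mu m x y = msim_in mu m (Gt xi delta mu m) x y"

definition alpha_i :: "(label \<Rightarrow> nat) \<Rightarrow> (label \<Rightarrow> label \<Rightarrow> bool) \<Rightarrow> (label set \<Rightarrow> bool) \<Rightarrow> nat
     \<Rightarrow> nat \<Rightarrow> label \<Rightarrow> label set" where
  "alpha_i xi delta mu n i x = {y \<in> I xi delta mu (n - i). gdist (snd (Gp xi delta mu n)) y x i}"

definition alpha_t :: "(label \<Rightarrow> nat) \<Rightarrow> (label \<Rightarrow> label \<Rightarrow> bool) \<Rightarrow> (label set \<Rightarrow> bool) \<Rightarrow> nat
     \<Rightarrow> label \<Rightarrow> label set" where
  "alpha_t xi delta mu m x = {x} \<union>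
     (\<Union>j\<in>{1..m}. {y \<in> I xi delta mu (m - j). gdist (snd (Gt xi delta mu m)) y x j})"

text \<open>k^(r)_x for x \<in> I_n (alpha_1(y) for y \<in> I_{n-1} is taken in G_{n-1}).\<close>
definition kr :: "(label \<Rightarrow> nat) \<Rightarrow> (label \<Rightarrow> label \<Rightarrow> bool) \<Rightarrow> (label set \<Rightarrow> bool) \<Rightarrow> nat
     \<Rightarrow> label \<Rightarrow> nat" where
  "kr xi delta mu n x = card {y \<in> I xi delta mu (n - 1).
      alpha_i xi delta mu (n - 1) 1 y \<inter> alpha_i xi delta mu n 2 x = {} \<and>
      gdist (snd (Gp xi delta mu n)) x y 3}"

end

theory Submission
  imports Defs
begin

text \<open>
  Let \<open>y\<close> be a vertex counted by \<open>k\<^sup>(\<^sup>r\<^sup>)\<^sub>v\<close> and \<open>v - z - w - y\<close> a path in \<open>G\<^sub>n\<close>.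
  If \<open>w\<close> were on level \<open>n - 2\<close>, it would lie in \<open>\<alpha>\<^sub>1(y) \<inter> \<alpha>\<^sub>2(v) = {}\<close>. So
  \<open>w = \<pi>(zi) = \<pi>(yj)\<close>: the children \<open>zi\<close> and \<open>yj\<close> in the intermediate graph on level \<open>n\<close>
  are connected by a chain of merges (pairs related by \<open>\<sim>\<^sup>m\<close>), and the two vertices of a
  merge are grandchildren of a common vertex on level \<open>n - 2\<close>. Follow the chain from \<open>zi\<close>.
  As long as every merge below a parent \<open>g\<close> of \<open>z\<close> reaches a vertex whose parent has no
  parent other than \<open>g\<close>, the chain stays below the parents of \<open>z\<close>; since \<open>y\<close> shares no
  parent with \<open>z\<close>, some merge \<open>c \<sim>\<^sup>m d\<close> below a parent \<open>g\<close> of \<open>z\<close> therefore reaches a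
  vertex \<open>d\<close> whose parent has a second parent \<open>g'\<close>. In \<open>G\<^sub>n\<^sub>-\<^sub>1\<close> that parent is \<open>\<pi>\<close> of
  children of both \<open>g\<close> and \<open>g'\<close>, so already on level \<open>n - 1\<close>
  some merge \<open>a \<sim>\<^sup>m b\<close> takes place below a parent \<open>u\<close> of \<open>g\<close>.
  Then \<open>u\<close> lies at distance 3 from \<open>v\<close> (via \<open>g\<close> and \<open>z\<close>), 2 from \<open>a\<close> and \<open>b\<close>, and 3 from
  \<open>c\<close> and \<open>d\<close>, which is the second alternative.
\<close>

section \<open>Walks in layered graphs\<close>

definition layered :: "label set set \<Rightarrow> bool" where
  "layered E \<longleftrightarrow> (\<forall>e\<in>E. \<exists>a b. e = {a, b} \<and> length b = Suc (length a))"

lemma walk_0_iff: "walk E 0 u v \<longleftrightarrow> u = v"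
  by (auto elim: walk.cases intro: walk.intros)

lemma walk_Suc_iff: "walk E (Suc k) u v \<longleftrightarrow> (\<exists>w. walk E k u w \<and> {w, v} \<in> E \<and> w \<noteq> v)"
  by (auto elim: walk.cases intro: walk.intros)

lemma walk_edge: "{a, b} \<in> E \<Longrightarrow> a \<noteq> b \<Longrightarrow> walk E 1 a b"
  using walk.walk0[of E a] walk.walkS by fastforce

lemma walk_path2: "{a, b} \<in> E \<Longrightarrow> {b, c} \<in> E \<Longrightarrow> a \<noteq> b \<Longrightarrow> b \<noteq> c \<Longrightarrow> walk E 2 a c"
  using walk_edge[of a b E] walk.walkS[of E 1 a b c] by (simp add: numeral_2_eq_2)

lemma walk_path3:
  "{a, b} \<in> E \<Longrightarrow> {b, c} \<in> E \<Longrightarrow> {c, d} \<in> E \<Longrightarrow> a \<noteq> b \<Longrightarrow> b \<noteq> c \<Longrightarrow> c \<noteq> d \<Longrightarrow>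
   walk E 3 a d"
  using walk_path2[of a b E c] walk.walkS[of E 2 a c d] by (simp add: numeral_3_eq_3)

lemma walk_path3E:
  assumes "walk E 3 a d"
  obtains b c where "{a, b} \<in> E" "{b, c} \<in> E" "{c, d} \<in> E" "a \<noteq> b" "b \<noteq> c" "c \<noteq> d"
  using assms by (auto simp: numeral_3_eq_3 walk_Suc_iff walk_0_iff)

lemma walk_path4E:
  assumes "walk E 4 a d"
  obtains b c e where "{a, b} \<in> E" "{b, c} \<in> E" "{c, e} \<in> E" "{e, d} \<in> E"
    "a \<noteq> b" "b \<noteq> c" "c \<noteq> e" "e \<noteq> d"
  using assms by (auto simp: eval_nat_numeral walk_Suc_iff walk_0_iff)

lemma layered_edge_length:
  "layered E \<Longrightarrow> {a, b} \<in> E \<Longrightarrow> length b = Suc (length a) \<or> length a = Suc (length b)"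
  unfolding layered_def by (fastforce simp: doubleton_eq_iff)

lemma walk_length_bounds:
  "walk E k u v \<Longrightarrow> layered E \<Longrightarrow> length v \<le> length u + k \<and> length u \<le> length v + k"
  by (induction rule: walk.induct) (auto dest: layered_edge_length)

lemma gdist_ascending_walk:
  "layered E \<Longrightarrow> walk E j a b \<Longrightarrow> length b = length a + j \<Longrightarrow> gdist E a b j"
  unfolding gdist_def using walk_length_bounds by fastforce

lemma gdist_ascending_edge:
  "layered E \<Longrightarrow> {a, b} \<in> E \<Longrightarrow> length b = Suc (length a) \<Longrightarrow> gdist E a b 1"
  by (intro gdist_ascending_walk walk_edge) auto

lemma gdist_ascending_path2:
  "layered E \<Longrightarrow> {a, b} \<in> E \<Longrightarrow> {b, c} \<in> E \<Longrightarrow> length b = Suc (length a) \<Longrightarrow>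
   length c = Suc (length b) \<Longrightarrow> gdist E a c 2"
  by (intro gdist_ascending_walk walk_path2) auto

lemma gdist_ascending_path3:
  "layered E \<Longrightarrow> {a, b} \<in> E \<Longrightarrow> {b, c} \<in> E \<Longrightarrow> {c, d} \<in> E \<Longrightarrow> length b = Suc (length a) \<Longrightarrow>
   length c = Suc (length b) \<Longrightarrow> length d = Suc (length c) \<Longrightarrow> gdist E a d 3"
  by (intro gdist_ascending_walk walk_path3) auto

section \<open>One step of the process\<close>

definition level_graph :: "nat \<Rightarrow> graph \<Rightarrow> bool" where
  "level_graph k G \<longleftrightarrow> finite (fst G) \<and> (\<forall>x\<in>fst G. length x \<le> k) \<and> layered (snd G) \<and>
     (\<forall>e\<in>snd G. e \<subseteq> fst G)"

context
  fixes xi :: "label \<Rightarrow> nat" and delta :: "label \<Rightarrow> label \<Rightarrow> bool" and mu :: "label set \<Rightarrow> bool"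
begin

lemma fst_tgraph:
  "fst (tgraph xi delta m G) =
     fst G \<union> {u @ [i] | u i. u \<in> Ilev (fst G) (m - 1) \<and> i \<in> Cset xi delta G u}"
  by (simp add: tgraph_def)

lemma snd_tgraph:
  "snd (tgraph xi delta m G) =
     snd G \<union> {{u, u @ [i]} | u i. u \<in> Ilev (fst G) (m - 1) \<and> i \<in> Cset xi delta G u}"
  by (simp add: tgraph_def)

lemma snd_subset_tgraph: "snd G \<subseteq> snd (tgraph xi delta m G)"
  unfolding snd_tgraph by blast

lemma tgraph_top_level_iff:
  "level_graph k G \<Longrightarrow> x \<in> Ilev (fst (tgraph xi delta (Suc k) G)) (Suc k) \<longleftrightarrow>
     (\<exists>u i. x = u @ [i] \<and> u \<in> Ilev (fst G) k \<and> i \<in> Cset xi delta G u)"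
  unfolding fst_tgraph level_graph_def Ilev_def by force

lemma tgraph_parent_edge:
  assumes "level_graph k G" "x \<in> Ilev (fst (tgraph xi delta (Suc k) G)) (Suc k)"
  shows "{butlast x, x} \<in> snd (tgraph xi delta (Suc k) G)"
  using assms unfolding tgraph_top_level_iff[OF assms(1)] snd_tgraph by auto

lemma finite_tgraph: "finite (fst G) \<Longrightarrow> finite (fst (tgraph xi delta m G))"
proof -
  assume "finite (fst G)"
  moreover have "{u @ [i] | u i. u \<in> Ilev (fst G) (m - 1) \<and> i \<in> Cset xi delta G u}
      \<subseteq> (\<Union>u\<in>fst G. (\<lambda>i. u @ [i]) ` {..xi u})"
    by (auto simp: Ilev_def Cset_def)
  ultimately show ?thesis
    unfolding fst_tgraph by (meson finite_UN_I finite_Un finite_atMost finite_imageI finite_subset)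
qed

lemma layered_tgraph:
  assumes "layered (snd G)" shows "layered (snd (tgraph xi delta m G))"
proof -
  have "\<exists>a b. {u, u @ [i]} = {a, b} \<and> length b = Suc (length a)" for u :: label and i
    by (intro exI[of _ u] exI[of _ "u @ [i]"]) simp
  then show ?thesis using assms unfolding layered_def snd_tgraph by blast
qed

lemma tgraph_edge_to_top:
  assumes G: "level_graph k G" and e: "{a, b} \<in> snd (tgraph xi delta (Suc k) G)"
    and b: "length b = Suc k"
  shows "a = butlast b"
proof -
  have "{a, b} \<notin> snd G"
    using G b unfolding level_graph_def by fastforce
  then obtain u i where "{a, b} = {u, u @ [i]}" "u \<in> Ilev (fst G) k"
    using e unfolding snd_tgraph by auto
  with b show ?thesis by (auto simp: doubleton_eq_iff Ilev_def)
qed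

lemma tgraph_edge_below_top:
  assumes "{a, b} \<in> snd (tgraph xi delta (Suc k) G)" "length a \<le> k" "length b \<le> k"
  shows "{a, b} \<in> snd G"
  using assms unfolding snd_tgraph by (auto simp: doubleton_eq_iff Ilev_def)

lemma tgraph_gdist_grandparent:
  assumes G: "level_graph k G" and x: "x \<in> Ilev (fst (tgraph xi delta (Suc k) G)) (Suc k)"
    and u: "{u, butlast x} \<in> snd G" "Suc (length u) = k"
  shows "gdist (snd (tgraph xi delta (Suc k) G)) u x 2"
proof (rule gdist_ascending_path2)
  show "layered (snd (tgraph xi delta (Suc k) G))"
    using G layered_tgraph unfolding level_graph_def by blast
  show "{u, butlast x} \<in> snd (tgraph xi delta (Suc k) G)"
    using u snd_subset_tgraph by blast
  show "{butlast x, x} \<in> snd (tgraph xi delta (Suc k) G)"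
    using tgraph_parent_edge[OF G x] .
qed (use x u in \<open>auto simp: Ilev_def\<close>)

lemma tgraph_gdist_great_grandparent:
  assumes G: "level_graph k G" and x: "x \<in> Ilev (fst (tgraph xi delta (Suc k) G)) (Suc k)"
    and c: "{c, butlast x} \<in> snd G" "Suc (length c) = k"
    and u: "{u, c} \<in> snd G" "Suc (length u) = length c"
  shows "gdist (snd (tgraph xi delta (Suc k) G)) u x 3"
proof (rule gdist_ascending_path3)
  show "layered (snd (tgraph xi delta (Suc k) G))"
    using G layered_tgraph unfolding level_graph_def by blast
  show "{u, c} \<in> snd (tgraph xi delta (Suc k) G)"
    "{c, butlast x} \<in> snd (tgraph xi delta (Suc k) G)"
    using u c snd_subset_tgraph by blast+
  show "{butlast x, x} \<in> snd (tgraph xi delta (Suc k) G)"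
    using tgraph_parent_edge[OF G x] .
qed (use x c u in \<open>auto simp: Ilev_def\<close>)

lemma piu_in_class:
  assumes "finite (fst T)" "x \<in> Ilev (fst T) m"
  shows "piu mu m T x \<in> Ilev (fst T) m \<and> (symclp (msim_in mu m T))\<^sup>*\<^sup>* x (piu mu m T x)"
proof -
  let ?S = "{w \<in> Ilev (fst T) m. (symclp (msim_in mu m T))\<^sup>*\<^sup>* x w}"
  have "finite ?S"
    using assms(1) by (rule finite_subset[rotated]) (auto simp: Ilev_def)
  moreover have "x \<in> ?S"
    using assms(2) by auto
  ultimately have "Min ?S \<in> ?S"
    by (intro Min_in) auto
  then show ?thesis
    unfolding piu_def by blast
qed

lemma piu_eq_imp_equiv:
  assumes "finite (fst T)" "x \<in> Ilev (fst T) m" "x' \<in> Ilev (fst T) m"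
    and "piu mu m T x = piu mu m T x'"
  shows "(symclp (msim_in mu m T))\<^sup>*\<^sup>* x x'"
proof -
  have "(symclp (msim_in mu m T))\<^sup>*\<^sup>* x' (piu mu m T x)"
    using piu_in_class[OF assms(1,3)] assms(4) by simp
  then have "(symclp (msim_in mu m T))\<^sup>*\<^sup>* (piu mu m T x) x'"
    by (rule sympD[OF symp_rtranclp_symclp])
  with piu_in_class[OF assms(1,2)] show ?thesis
    by (blast intro: rtranclp_trans)
qed

lemma fst_next_graph:
  "fst (next_graph xi delta mu m G) =
     fst G \<union> piu mu m (tgraph xi delta m G) ` Ilev (fst (tgraph xi delta m G)) m"
  by (simp add: next_graph_def Let_def)

lemma snd_next_graph:
  "snd (next_graph xi delta mu m G) = snd G \<union>
     {{v, piu mu m (tgraph xi delta m G) (v @ [i])} | v i.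
        v \<in> Ilev (fst G) (m - 1) \<and> i \<in> Cset xi delta G v}"
  by (simp add: next_graph_def Let_def)

lemma piu_tgraph_top_level:
  assumes "level_graph k G" "x \<in> Ilev (fst (tgraph xi delta (Suc k) G)) (Suc k)"
  shows "piu mu (Suc k) (tgraph xi delta (Suc k) G) x \<in>
    Ilev (fst (tgraph xi delta (Suc k) G)) (Suc k)"
  using piu_in_class[OF finite_tgraph assms(2)] assms(1) unfolding level_graph_def by blast

lemma level_graph_next_graph:
  assumes G: "level_graph k G"
  shows "level_graph (Suc k) (next_graph xi delta mu (Suc k) G)"
proof -
  let ?T = "tgraph xi delta (Suc k) G"
  let ?top = "Ilev (fst ?T) (Suc k)"
  let ?\<pi> = "piu mu (Suc k) ?T"
  have child: "v @ [i] \<in> ?top" if "v \<in> Ilev (fst G) k" "i \<in> Cset xi delta G v" for v i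
    using tgraph_top_level_iff[OF G] that by blast
  have top: "?\<pi> x \<in> ?top" if "x \<in> ?top" for x
    using piu_tgraph_top_level[OF G that] .
  have "finite ?top"
    using G finite_tgraph unfolding level_graph_def Ilev_def by auto
  then have "finite (fst (next_graph xi delta mu (Suc k) G))"
    using G unfolding fst_next_graph level_graph_def by blast
  moreover have "\<forall>x\<in>fst (next_graph xi delta mu (Suc k) G). length x \<le> Suc k"
    using G top unfolding fst_next_graph level_graph_def by (fastforce simp: Ilev_def)
  moreover have "\<exists>a b. {v, ?\<pi> (v @ [i])} = {a, b} \<and> length b = Suc (length a)"
    if "v \<in> Ilev (fst G) k" "i \<in> Cset xi delta G v" for v i
    using top[OF child[OF that]] that
    by (intro exI[of _ v] exI[of _ "?\<pi> (v @ [i])"]) (simp add: Ilev_def)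
  then have "layered (snd (next_graph xi delta mu (Suc k) G))"
    using G unfolding snd_next_graph level_graph_def layered_def by auto
  moreover have
    "\<forall>e\<in>snd (next_graph xi delta mu (Suc k) G). e \<subseteq> fst (next_graph xi delta mu (Suc k) G)"
    using G child unfolding snd_next_graph fst_next_graph level_graph_def by (auto simp: Ilev_def)
  ultimately show ?thesis
    unfolding level_graph_def by blast
qed

lemma next_graph_new_edgeE:
  assumes G: "level_graph k G" and e: "{a, b} \<in> snd (next_graph xi delta mu (Suc k) G)"
    and new: "{a, b} \<notin> snd G"
  obtains v i where "{a, b} = {v, piu mu (Suc k) (tgraph xi delta (Suc k) G) (v @ [i])}"
    "length v = k" "v @ [i] \<in> Ilev (fst (tgraph xi delta (Suc k) G)) (Suc k)"
    "length (piu mu (Suc k) (tgraph xi delta (Suc k) G) (v @ [i])) = Suc k"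
proof -
  obtain v i where e': "{a, b} = {v, piu mu (Suc k) (tgraph xi delta (Suc k) G) (v @ [i])}"
    and v: "v \<in> Ilev (fst G) k" "i \<in> Cset xi delta G v"
    using e new unfolding snd_next_graph by auto
  have "v @ [i] \<in> Ilev (fst (tgraph xi delta (Suc k) G)) (Suc k)"
    using tgraph_top_level_iff[OF G] v by blast
  with piu_tgraph_top_level[OF G this] e' v that show ?thesis
    by (simp add: Ilev_def)
qed

lemma next_graph_edge_to_top:
  assumes G: "level_graph k G" and e: "{a, b} \<in> snd (next_graph xi delta mu (Suc k) G)"
    and b: "length b = Suc k"
  obtains i where "a @ [i] \<in> Ilev (fst (tgraph xi delta (Suc k) G)) (Suc k)"
    "b = piu mu (Suc k) (tgraph xi delta (Suc k) G) (a @ [i])"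
proof -
  have "{a, b} \<notin> snd G"
    using G b unfolding level_graph_def by fastforce
  with next_graph_new_edgeE[OF G e] b that show ?thesis
    by (metis Suc_n_not_n doubleton_eq_iff)
qed

lemma next_graph_edge_below_top:
  assumes G: "level_graph k G" and e: "{a, b} \<in> snd (next_graph xi delta mu (Suc k) G)"
    and "length a \<le> k" "length b \<le> k"
  shows "{a, b} \<in> snd G"
  using next_graph_new_edgeE[OF G e] assms(3,4) by (metis Suc_n_not_le_n doubleton_eq_iff)

section \<open>Merges\<close>

lemma symclp_msim_in_level:
  "symclp (msim_in mu m T) x x' \<Longrightarrow> x \<in> Ilev (fst T) m \<and> x' \<in> Ilev (fst T) m"
  by (auto simp: msim_in_def elim: symclpE)

lemma msim_in_tgraph_common_grandparent:
  assumes G: "level_graph k G" and xx': "msim_in mu (Suc k) (tgraph xi delta (Suc k) G) x x'"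
  shows "\<exists>c. {c, butlast x} \<in> snd G \<and> {c, butlast x'} \<in> snd G \<and> Suc (length c) = k"
proof -
  let ?E = "snd (tgraph xi delta (Suc k) G)"
  have lx: "length x = Suc k" "length x' = Suc k" and d4: "gdist ?E x x' 4"
    using xx' by (auto simp: msim_in_def Ilev_def)
  obtain z1 z2 z3 where z: "{x, z1} \<in> ?E" "{z1, z2} \<in> ?E" "{z2, z3} \<in> ?E" "{z3, x'} \<in> ?E"
    using d4 unfolding gdist_def by (auto elim: walk_path4E)
  have z13: "z1 = butlast x" "z3 = butlast x'"
    using tgraph_edge_to_top[OF G _ lx(1), of z1] z(1) tgraph_edge_to_top[OF G z(4) lx(2)]
    by (simp_all add: insert_commute)
  have "layered ?E"
    using G layered_tgraph unfolding level_graph_def by blast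
  then have "length z2 = Suc k \<or> Suc (length z2) = k"
    using layered_edge_length z(2) z13 lx by fastforce
  then show ?thesis
  proof
    assume "length z2 = Suc k"
    then have "z1 = z3"
      using tgraph_edge_to_top[OF G z(2)] tgraph_edge_to_top[OF G _ _, of z3 z2] z(3)
      by (simp add: insert_commute)
    then have "walk ?E 2 x x'"
      using z(1,4) z13 lx by (intro walk_path2[of x z1]) auto
    with d4 show ?thesis
      unfolding gdist_def by auto
  next
    assume z2: "Suc (length z2) = k"
    then have "{z2, z1} \<in> snd G" "{z2, z3} \<in> snd G"
      using tgraph_edge_below_top z(2,3) z13 lx by (auto simp: insert_commute)
    with z13 z2 show ?thesis by blast
  qed
qed

lemma symclp_msim_in_tgraph_common_grandparent:
  "level_graph k G \<Longrightarrow> symclp (msim_in mu (Suc k) (tgraph xi delta (Suc k) G)) x x' \<Longrightarrow>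
   \<exists>c. {c, butlast x} \<in> snd G \<and> {c, butlast x'} \<in> snd G \<and> Suc (length c) = k"
  by (elim symclpE) (blast dest: msim_in_tgraph_common_grandparent)+

lemma common_child_imp_merge_chain:
  assumes G: "level_graph k G"
    and z: "{z, w} \<in> snd (next_graph xi delta mu (Suc k) G)"
    and y: "{y, w} \<in> snd (next_graph xi delta mu (Suc k) G)" and w: "length w = Suc k"
  obtains i j
  where "(symclp (msim_in mu (Suc k) (tgraph xi delta (Suc k) G)))\<^sup>*\<^sup>* (z @ [i]) (y @ [j])"
proof -
  obtain i j where
    "z @ [i] \<in> Ilev (fst (tgraph xi delta (Suc k) G)) (Suc k)"
    "y @ [j] \<in> Ilev (fst (tgraph xi delta (Suc k) G)) (Suc k)"
    "piu mu (Suc k) (tgraph xi delta (Suc k) G) (z @ [i]) =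
     piu mu (Suc k) (tgraph xi delta (Suc k) G) (y @ [j])"
    using next_graph_edge_to_top[OF G z w] next_graph_edge_to_top[OF G y w] by metis
  moreover have "finite (fst (tgraph xi delta (Suc k) G))"
    using G finite_tgraph unfolding level_graph_def by blast
  ultimately show ?thesis
    using piu_eq_imp_equiv that by blast
qed

lemma two_parents_imp_merge:
  assumes G: "level_graph k G"
    and c: "{c, p} \<in> snd (next_graph xi delta mu (Suc k) G)"
    and c': "{c', p} \<in> snd (next_graph xi delta mu (Suc k) G)"
    and "c \<noteq> c'" and p: "length p = Suc k"
  obtains a b u where "msim_in mu (Suc k) (tgraph xi delta (Suc k) G) a b"
    "{u, c} \<in> snd G" "Suc (length u) = k"
    "gdist (snd (tgraph xi delta (Suc k) G)) u a 2"
    "gdist (snd (tgraph xi delta (Suc k) G)) u b 2"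
proof -
  let ?T = "tgraph xi delta (Suc k) G"
  let ?R = "symclp (msim_in mu (Suc k) ?T)"
  obtain i j where "?R\<^sup>*\<^sup>* (c @ [i]) (c' @ [j])"
    using common_child_imp_merge_chain[OF G c c' p] by blast
  moreover have "c @ [i] \<noteq> c' @ [j]"
    using \<open>c \<noteq> c'\<close> by simp
  ultimately obtain x where x: "?R (c @ [i]) x"
    by (auto elim: converse_rtranclpE)
  then obtain u where u: "{u, c} \<in> snd G" "{u, butlast x} \<in> snd G" "Suc (length u) = k"
    using symclp_msim_in_tgraph_common_grandparent[OF G] by fastforce
  have "gdist (snd ?T) u (c @ [i]) 2" "gdist (snd ?T) u x 2"
    using tgraph_gdist_grandparent[OF G _ _ u(3)] symclp_msim_in_level[OF x] u(1,2) by auto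
  with x u(1,3) that show ?thesis
    by (auto elim: symclpE)
qed

lemma merge_chain_shares_parent:
  assumes G: "level_graph k G"
    and chain: "(symclp (msim_in mu (Suc k) (tgraph xi delta (Suc k) G)))\<^sup>*\<^sup>* (z @ [i]) x"
    and unique: "\<And>x' x'' g g'. symclp (msim_in mu (Suc k) (tgraph xi delta (Suc k) G)) x' x'' \<Longrightarrow>
       {g, z} \<in> snd G \<Longrightarrow> {g, butlast x'} \<in> snd G \<Longrightarrow> {g, butlast x''} \<in> snd G \<Longrightarrow>
       {g', butlast x''} \<in> snd G \<Longrightarrow> Suc (length g) = k \<Longrightarrow> Suc (length g') = k \<Longrightarrow> g' = g"
  shows "butlast x = z \<or> (\<exists>g. {g, z} \<in> snd G \<and> {g, butlast x} \<in> snd G \<and> Suc (length g) = k \<and>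
     (\<forall>g'. {g', butlast x} \<in> snd G \<longrightarrow> Suc (length g') = k \<longrightarrow> g' = g))"
  using chain
proof (induction rule: rtranclp_induct)
  case base
  show ?case by simp
next
  case (step x x')
  obtain g where g: "{g, butlast x} \<in> snd G" "{g, butlast x'} \<in> snd G" "Suc (length g) = k"
    using symclp_msim_in_tgraph_common_grandparent[OF G step.hyps(2)] by blast
  from step.IH g have "{g, z} \<in> snd G"
    by auto
  with unique[OF step.hyps(2) this g(1,2)] g show ?case
    by blast
qed

section \<open>The process\<close>

lemma level_graph_Gp: "level_graph m (Gp xi delta mu m)"
proof (induction m)
  case 0
  show ?case by (simp add: level_graph_def layered_def)
next
  case (Suc m)
  then show ?case by (simp add: level_graph_next_graph)
qed

lemma layered_Gp: "layered (snd (Gp xi delta mu m))"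
  using level_graph_Gp unfolding level_graph_def by blast

lemma snd_Gp_mono: "k \<le> m \<Longrightarrow> snd (Gp xi delta mu k) \<subseteq> snd (Gp xi delta mu m)"
  by (rule lift_Suc_mono_le[of "\<lambda>m. snd (Gp xi delta mu m)"]) (auto simp: snd_next_graph)

lemma Gp_vertex_in_I: "x \<in> fst (Gp xi delta mu m) \<Longrightarrow> x \<in> I xi delta mu (length x)"
proof (induction m)
  case 0
  then show ?case by (simp add: I_def Ilev_def)
next
  case (Suc m)
  show ?case
  proof (cases "x \<in> fst (Gp xi delta mu m)")
    case True
    then show ?thesis using Suc.IH by blast
  next
    case False
    then have "length x = Suc m"
      using Suc.prems piu_tgraph_top_level[OF level_graph_Gp]
      by (auto simp: fst_next_graph Ilev_def)
    with Suc.prems show ?thesis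
      by (simp add: I_def Ilev_def)
  qed
qed

lemma Gp_edge_vertex_in_I: "{a, b} \<in> snd (Gp xi delta mu m) \<Longrightarrow> a \<in> I xi delta mu (length a)"
  using Gp_vertex_in_I level_graph_Gp unfolding level_graph_def by blast

lemma Gp_edge_below_top:
  "{a, b} \<in> snd (Gp xi delta mu (Suc k)) \<Longrightarrow> length a \<le> k \<Longrightarrow> length b \<le> k \<Longrightarrow>
   {a, b} \<in> snd (Gp xi delta mu k)"
  using next_graph_edge_below_top[OF level_graph_Gp] by simp

lemma gdist_in_alpha_t:
  "gdist (snd (Gt xi delta mu m)) u x j \<Longrightarrow> u \<in> I xi delta mu (m - j) \<Longrightarrow> 1 \<le> j \<Longrightarrow> j \<le> m \<Longrightarrow>
   u \<in> alpha_t xi delta mu m x"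
  unfolding alpha_t_def by auto

lemma kr_pos_path:
  assumes v: "v \<in> I xi delta mu (Suc k)" and kr: "kr xi delta mu (Suc k) v > 0"
  obtains y z w where "y \<in> I xi delta mu k"
    "alpha_i xi delta mu k 1 y \<inter> alpha_i xi delta mu (Suc k) 2 v = {}"
    "{v, z} \<in> snd (Gp xi delta mu (Suc k))" "{z, w} \<in> snd (Gp xi delta mu (Suc k))"
    "{w, y} \<in> snd (Gp xi delta mu (Suc k))"
    "z \<noteq> y" "length z = k" "Suc (length w) = k \<or> length w = Suc k"
proof -
  let ?G = "Gp xi delta mu (Suc k)"
  have "{y \<in> I xi delta mu k. alpha_i xi delta mu k 1 y \<inter> alpha_i xi delta mu (Suc k) 2 v = {} \<and>
      gdist (snd ?G) v y 3} \<noteq> {}"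
    using kr unfolding kr_def diff_Suc_1 by (metis card.empty less_irrefl)
  then obtain y where y: "y \<in> I xi delta mu k"
    "alpha_i xi delta mu k 1 y \<inter> alpha_i xi delta mu (Suc k) 2 v = {}"
    and d3: "gdist (snd ?G) v y 3"
    by blast
  obtain z w where zw: "{v, z} \<in> snd ?G" "{z, w} \<in> snd ?G" "{w, y} \<in> snd ?G" "v \<noteq> z"
    using d3 unfolding gdist_def by (auto elim: walk_path3E)
  have "z \<noteq> y"
  proof
    assume "z = y"
    then have "walk (snd ?G) 1 v y"
      using zw(1,4) by (intro walk_edge) auto
    with d3 show False
      unfolding gdist_def by auto
  qed
  have G: "layered (snd ?G)" "\<forall>e\<in>snd ?G. e \<subseteq> fst ?G" "\<forall>x\<in>fst ?G. length x \<le> Suc k"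
    using level_graph_Gp unfolding level_graph_def by blast+
  have "length v = Suc k"
    using v by (simp add: I_def Ilev_def)
  then have "length z = k"
    using layered_edge_length[OF G(1) zw(1)] G(2,3) zw(1) by fastforce
  moreover have "Suc (length w) = k \<or> length w = Suc k"
    using layered_edge_length[OF G(1) zw(2)] \<open>length z = k\<close> by auto
  ultimately show ?thesis
    using that y zw \<open>z \<noteq> y\<close> by blast
qed

lemma parent_in_alpha_1_and_alpha_2:
  assumes v: "v \<in> I xi delta mu (Suc k)" and y: "y \<in> I xi delta mu k"
    and vz: "{v, z} \<in> snd (Gp xi delta mu (Suc k))" "length z = k"
    and gz: "{g, z} \<in> snd (Gp xi delta mu (Suc k))" and gy: "{g, y} \<in> snd (Gp xi delta mu k)"
    and g: "Suc (length g) = k"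
  shows "g \<in> alpha_i xi delta mu k 1 y \<inter> alpha_i xi delta mu (Suc k) 2 v"
proof -
  have gI: "g \<in> I xi delta mu (k - 1)"
    using Gp_edge_vertex_in_I[OF gy] g by fastforce
  have lengths: "length y = k" "length v = Suc k"
    using v y by (simp_all add: I_def Ilev_def)
  have "gdist (snd (Gp xi delta mu k)) g y 1"
    using gdist_ascending_edge[OF layered_Gp gy] g lengths by simp
  moreover have "gdist (snd (Gp xi delta mu (Suc k))) g v 2"
    using gdist_ascending_path2[OF layered_Gp gz, of v] vz g lengths by (simp add: insert_commute)
  ultimately show ?thesis
    using gI by (simp add: alpha_i_def)
qed

lemma kr_pos_merge_chain:
  assumes v: "v \<in> I xi delta mu (Suc k)" and kr: "kr xi delta mu (Suc k) v > 0"
  obtains y z i j where "{v, z} \<in> snd (Gp xi delta mu (Suc k))" "length z = k" "z \<noteq> y"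
    "\<And>g. {g, z} \<in> snd (Gp xi delta mu k) \<Longrightarrow> {g, y} \<in> snd (Gp xi delta mu k) \<Longrightarrow>
       Suc (length g) = k \<Longrightarrow> False"
    "(symclp (msim_in mu (Suc k) (tgraph xi delta (Suc k) (Gp xi delta mu k))))\<^sup>*\<^sup>*
       (z @ [i]) (y @ [j])"
proof -
  let ?E = "snd (Gp xi delta mu k)"
  obtain y z w where y: "y \<in> I xi delta mu k"
    and disjoint: "alpha_i xi delta mu k 1 y \<inter> alpha_i xi delta mu (Suc k) 2 v = {}"
    and path: "{v, z} \<in> snd (Gp xi delta mu (Suc k))" "{z, w} \<in> snd (Gp xi delta mu (Suc k))"
      "{w, y} \<in> snd (Gp xi delta mu (Suc k))"
    and "z \<noteq> y" "length z = k" and w: "Suc (length w) = k \<or> length w = Suc k"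
    using kr_pos_path[OF v kr] by metis
  have no_common_parent:
    "\<not> ({g, z} \<in> snd (Gp xi delta mu (Suc k)) \<and> {g, y} \<in> ?E \<and> Suc (length g) = k)" for g
    using parent_in_alpha_1_and_alpha_2[OF v y path(1) \<open>length z = k\<close>] disjoint by blast
  have "length w = Suc k"
  proof (rule ccontr)
    assume "length w \<noteq> Suc k"
    with w y have "{w, y} \<in> ?E" "Suc (length w) = k"
      using Gp_edge_below_top[OF path(3)] by (auto simp: I_def Ilev_def)
    with no_common_parent[of w] path(2) show False
      by (simp add: insert_commute)
  qed
  moreover have "{z, w} \<in> snd (next_graph xi delta mu (Suc k) (Gp xi delta mu k))"
    "{y, w} \<in> snd (next_graph xi delta mu (Suc k) (Gp xi delta mu k))"
    using path(2,3) by (simp_all add: insert_commute)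
  ultimately obtain i j
    where "(symclp (msim_in mu (Suc k) (tgraph xi delta (Suc k) (Gp xi delta mu k))))\<^sup>*\<^sup>*
      (z @ [i]) (y @ [j])"
    using common_child_imp_merge_chain[OF level_graph_Gp] by metis
  with that[OF path(1) \<open>length z = k\<close> \<open>z \<noteq> y\<close>] no_common_parent
    snd_Gp_mono[OF lessI[THEN less_imp_le]]
  show ?thesis by blast
qed

lemma great_grandparent_in_alpha_3:
  assumes v: "v \<in> I xi delta mu (Suc k)"
    and vz: "{v, z} \<in> snd (Gp xi delta mu (Suc k))" "length z = k"
    and gz: "{g, z} \<in> snd (Gp xi delta mu k)" "Suc (length g) = k"
    and ug: "{u, g} \<in> snd (Gp xi delta mu k)" "Suc (length u) = length g"
  shows "u \<in> alpha_i xi delta mu (Suc k) 3 v"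
proof -
  have "gdist (snd (Gp xi delta mu (Suc k))) u v 3"
  proof (rule gdist_ascending_path3[OF layered_Gp])
    show "{u, g} \<in> snd (Gp xi delta mu (Suc k))" "{g, z} \<in> snd (Gp xi delta mu (Suc k))"
      using ug(1) gz(1) snd_Gp_mono[of k "Suc k"] by auto
    show "{z, v} \<in> snd (Gp xi delta mu (Suc k))"
      using vz(1) by (simp add: insert_commute)
  qed (use v vz(2) gz(2) ug(2) in \<open>auto simp: I_def Ilev_def\<close>)
  moreover have "Suc k - 3 = length u"
    using gz(2) ug(2) by simp
  ultimately show ?thesis
    using Gp_edge_vertex_in_I[OF ug(1)] by (simp add: alpha_i_def)
qed

lemma double_parent_merge_witness:
  assumes v: "v \<in> I xi delta mu (Suc k)"
    and vz: "{v, z} \<in> snd (Gp xi delta mu (Suc k))" "length z = k"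
    and gz: "{g, z} \<in> snd (Gp xi delta mu k)" "Suc (length g) = k"
    and cd: "symclp (msim_in mu (Suc k) (tgraph xi delta (Suc k) (Gp xi delta mu k))) c d"
    and gc: "{g, butlast c} \<in> snd (Gp xi delta mu k)" "{g, butlast d} \<in> snd (Gp xi delta mu k)"
    and g'd: "{g', butlast d} \<in> snd (Gp xi delta mu k)" "g' \<noteq> g"
  shows "\<exists>u \<in> alpha_i xi delta mu (Suc k) 3 v. \<exists>a b c d.
     a \<in> It xi delta mu k \<and> b \<in> It xi delta mu k \<and>
     c \<in> It xi delta mu (Suc k) \<and> d \<in> It xi delta mu (Suc k) \<and>
     msim xi delta mu k a b \<and> msim xi delta mu (Suc k) c d \<and>
     u \<in> alpha_t xi delta mu k a \<inter> alpha_t xi delta mu k b \<inter>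
          alpha_t xi delta mu (Suc k) c \<inter> alpha_t xi delta mu (Suc k) d"
proof -
  obtain k1 where k: "k = Suc k1"
    using gz(2) by (cases k) auto
  let ?T1 = "tgraph xi delta (Suc k1) (Gp xi delta mu k1)"
  let ?T2 = "tgraph xi delta (Suc k) (Gp xi delta mu k)"
  have cdI: "c \<in> Ilev (fst ?T2) (Suc k)" "d \<in> Ilev (fst ?T2) (Suc k)"
    using symclp_msim_in_level[OF cd] by auto
  then have "length (butlast d) = Suc k1"
    using k by (simp add: Ilev_def)
  moreover have "{g, butlast d} \<in> snd (next_graph xi delta mu (Suc k1) (Gp xi delta mu k1))"
    "{g', butlast d} \<in> snd (next_graph xi delta mu (Suc k1) (Gp xi delta mu k1))"
    using gc(2) g'd(1) k by simp_all
  ultimately obtain a b u where ab: "msim_in mu (Suc k1) ?T1 a b"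
    and u: "{u, g} \<in> snd (Gp xi delta mu k1)" "Suc (length u) = k1"
    and ua: "gdist (snd ?T1) u a 2" "gdist (snd ?T1) u b 2"
    using two_parents_imp_merge[OF level_graph_Gp _ _ not_sym[OF g'd(2)]] by metis
  have uI: "u \<in> I xi delta mu (k1 - 1)"
    using Gp_edge_vertex_in_I[OF u(1)] u(2) by fastforce
  have ug: "{u, g} \<in> snd (Gp xi delta mu k)"
    using u(1) snd_Gp_mono[of k1 k] k by auto
  have "u \<in> alpha_i xi delta mu (Suc k) 3 v"
    using great_grandparent_in_alpha_3[OF v vz gz ug] u(2) gz(2) k by simp
  moreover have "u \<in> alpha_t xi delta mu k a \<inter> alpha_t xi delta mu k b"
    using gdist_in_alpha_t[of k u _ 2] ua uI u(2) k by (auto simp: Gt_def)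
  moreover have "u \<in> alpha_t xi delta mu (Suc k) x"
    if "x \<in> Ilev (fst ?T2) (Suc k)" "{g, butlast x} \<in> snd (Gp xi delta mu k)" for x
    using gdist_in_alpha_t[of "Suc k" u x 3]
      tgraph_gdist_great_grandparent[OF level_graph_Gp that gz(2) ug] u(2) gz(2) uI k
    by (auto simp: Gt_def)
  moreover have "a \<in> It xi delta mu k" "b \<in> It xi delta mu k" "msim xi delta mu k a b"
    using ab k by (simp_all add: It_def msim_def Gt_def msim_in_def)
  moreover have "c \<in> It xi delta mu (Suc k)" "d \<in> It xi delta mu (Suc k)"
    using cdI by (simp_all add: It_def Gt_def)
  moreover have "msim xi delta mu (Suc k) c d \<or> msim xi delta mu (Suc k) d c"
    using cd by (auto simp: msim_def Gt_def elim: symclpE)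
  ultimately show ?thesis
    using cdI gc by blast
qed

end

theorem lemma6p2:
  fixes p q :: real
    and xi :: "label \<Rightarrow> nat"
    and delta :: "label \<Rightarrow> label \<Rightarrow> bool"
    and mu :: "label set \<Rightarrow> bool"
    and n :: nat and v :: label
  assumes "0 \<le> p" "p \<le> 1" "0 \<le> q" "q \<le> 1"
    and "q = 0 \<Longrightarrow> (\<forall>x y. \<not> delta x y) \<and> (\<forall>x y. x \<noteq> y \<longrightarrow> \<not> mu {x, y})"
    and "q = 1 \<Longrightarrow> (\<forall>x y. delta x y) \<and> (\<forall>x y. x \<noteq> y \<longrightarrow> mu {x, y})"
    and "n \<ge> 3"
    and "v \<in> I xi delta mu n"
    and "kr xi delta mu n v > 0"
  shows "\<exists>u \<in> alpha_i xi delta mu n 3 v. \<exists>a b c d.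
     ((a \<in> It xi delta mu n \<and> b \<in> It xi delta mu n \<and> c \<in> It xi delta mu n \<and> d \<in> It xi delta mu n \<and>
       a \<noteq> b \<and> a \<noteq> d \<and> b \<noteq> d \<and>
       msim xi delta mu n a b \<and> msim xi delta mu n c d \<and>
       u \<in> alpha_t xi delta mu n a \<inter> alpha_t xi delta mu n b \<inter>
            alpha_t xi delta mu n c \<inter> alpha_t xi delta mu n d)
    \<or> (a \<in> It xi delta mu (n - 1) \<and> b \<in> It xi delta mu (n - 1) \<and>
       c \<in> It xi delta mu n \<and> d \<in> It xi delta mu n \<and>
       msim xi delta mu (n - 1) a b \<and> msim xi delta mu n c d \<and>
       u \<in> alpha_t xi delta mu (n - 1) a \<inter> alpha_t xi delta mu (n - 1) b \<inter>
            alpha_t xi delta mu n c \<inter> alpha_t xi delta mu n d))"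
proof -
  obtain k where n: "n = Suc k"
    using \<open>n \<ge> 3\<close> by (cases n) auto
  let ?E = "snd (Gp xi delta mu k)"
  let ?R = "symclp (msim_in mu (Suc k) (tgraph xi delta (Suc k) (Gp xi delta mu k)))"
  have v: "v \<in> I xi delta mu (Suc k)"
    using assms(8) n by simp
  obtain y z i j where vz: "{v, z} \<in> snd (Gp xi delta mu (Suc k))" "length z = k" and "z \<noteq> y"
    and no_common_parent: "\<And>g. {g, z} \<in> ?E \<Longrightarrow> {g, y} \<in> ?E \<Longrightarrow> Suc (length g) = k \<Longrightarrow> False"
    and chain: "?R\<^sup>*\<^sup>* (z @ [i]) (y @ [j])"
    using kr_pos_merge_chain[OF v] assms(9) n by metis
  show ?thesis
  proof (cases "\<forall>c d g g'. ?R c d \<longrightarrow> {g, z} \<in> ?E \<longrightarrow> {g, butlast c} \<in> ?E \<longrightarrow> {g, butlast d} \<in> ?E \<longrightarrow>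
      {g', butlast d} \<in> ?E \<longrightarrow> Suc (length g) = k \<longrightarrow> Suc (length g') = k \<longrightarrow> g' = g")
    case True
    with merge_chain_shares_parent[OF level_graph_Gp chain] \<open>z \<noteq> y\<close> no_common_parent
    show ?thesis by (metis butlast_snoc)
  next
    case False
    then obtain c d g g' where "?R c d" "{g, z} \<in> ?E" "{g, butlast c} \<in> ?E" "{g, butlast d} \<in> ?E"
      "{g', butlast d} \<in> ?E" "Suc (length g) = k" "g' \<noteq> g"
      by blast
    from double_parent_merge_witness[OF v vz this(2,6,1,3,4,5,7)]
    show ?thesis
      unfolding n diff_Suc_1 by blast
  qed
qed

end
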